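(* Let $f(z)=z+\sum_{k=2}^{\infty}a_kz^k$ be analytic in $\mathbb{D}=\{z:|z|<1\}$ with $zf'(z)-f(z)=\frac12 z^2\phi(z)$ for all $z\in\mathbb{D}$, where $\phi$ is analytic in $\mathbb{D}$ and $|\phi(z)|\le1$, and let $s_n(z;f)=z+\sum_{k=2}^n a_kz^k$. Then $\mathrm{Re}\, s_n'(z;f)>0$ in $|z|\le r_0$ for all $n\ge12$, where $r_0=0.547$. *)

theory Defs
  imports "HOL-Complex_Analysis.Complex_Analysis"
begin

definition taylor_coeff :: "(complex \<Rightarrow> complex) \<Rightarrow> nat \<Rightarrow> complex" where
  "taylor_coeff f k = (deriv ^^ k) f 0 / of_nat (fact k)"

definition partial_sum :: "(complex \<Rightarrow> complex) \<Rightarrow> nat \<Rightarrow> complex \<Rightarrow> complex" where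
  "partial_sum f n z = z + (\<Sum>k=2..n. taylor_coeff f k * z ^ k)"

end

theory Submission imports Defs begin

(* Comparing Taylor coefficients in z f' - f = z^2 phi / 2 gives (k - 1) a_k = c_(k-2) / 2,
   where c_j are the coefficients of phi, and |c_j| <= 1 by Cauchy's estimate. Hence for |z| <= r
   |s_n'(z) - 1| <= sum_(k>=2) k / (2 (k - 1)) r^(k-1), and for r = 0.547 this series stays
   below 1 (its value is about 0.998), so Re s_n'(z) > 0. The estimate is uniform in n. *)

lemma taylor_coeff_eq_fps_expansion_nth: "taylor_coeff f k = fps_expansion f 0 $ k"
  by (simp add: taylor_coeff_def fps_expansion_def)

lemma norm_taylor_coeff_le:
  fixes \<phi> :: "complex \<Rightarrow> complex"
  assumes holo: "\<phi> holomorphic_on ball 0 1"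
    and bound: "\<And>z. z \<in> ball 0 1 \<Longrightarrow> cmod (\<phi> z) \<le> M"
  shows "cmod (taylor_coeff \<phi> j) \<le> M"
proof -
  let ?c = "cmod (taylor_coeff \<phi> j)"
  have on_circle: "?c * \<rho>^j \<le> M" if "0 < \<rho>" "\<rho> < 1" for \<rho> :: real
  proof -
    have "\<phi> holomorphic_on ball 0 \<rho>"
      using holo that by (auto elim: holomorphic_on_subset)
    moreover have "continuous_on (cball 0 \<rho>) \<phi>"
      using holomorphic_on_imp_continuous_on[OF holo] that by (auto elim: continuous_on_subset)
    moreover have "\<And>x. norm (0 - x) = \<rho> \<Longrightarrow> norm (\<phi> x) \<le> M"
      using that by (intro bound) auto
    ultimately have "norm ((deriv ^^ j) \<phi> 0) \<le> fact j * M / \<rho>^j"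
      using that by (intro Cauchy_inequality) auto
    then show ?thesis
      using that by (simp add: taylor_coeff_def norm_divide field_simps)
  qed
  have "((\<lambda>\<rho>. ?c * \<rho>^j) \<longlongrightarrow> ?c * 1^j) (at_left (1::real))"
    by (intro tendsto_intros)
  moreover have "eventually (\<lambda>\<rho>. \<rho> \<in> {0<..<(1::real)}) (at_left 1)"
    by (rule eventually_at_left_real) simp
  then have "eventually (\<lambda>\<rho>. ?c * \<rho>^j \<le> M) (at_left (1::real))"
    by eventually_elim (use on_circle in auto)
  ultimately have "?c * 1^j \<le> M"
    by (intro tendsto_upperbound) auto
  then show ?thesis by simp
qed

lemma taylor_coeff_euler_difference:
  fixes f \<phi> :: "complex \<Rightarrow> complex"
  assumes S: "open S" "0 \<in> S"
    and f_holo: "f holomorphic_on S"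
    and phi_holo: "\<phi> holomorphic_on S"
    and eq: "\<And>z. z \<in> S \<Longrightarrow> z * deriv f z - f z = (1/2) * z^2 * \<phi> z"
    and k: "k \<ge> 2"
  shows "(of_nat k - 1) * taylor_coeff f k = (1/2) * taylor_coeff \<phi> (k - 2)"
proof -
  define F where "F = fps_expansion f 0"
  define P where "P = fps_expansion \<phi> 0"
  have F: "f has_fps_expansion F" and P: "\<phi> has_fps_expansion P"
    unfolding F_def P_def using S f_holo phi_holo by auto
  have "eventually (\<lambda>z. z \<in> S) (nhds 0)"
    using S by (intro eventually_nhds_in_open)
  then have ev: "eventually (\<lambda>z. (1/2) * z^2 * \<phi> z = z * deriv f z - f z) (nhds 0)"
    by eventually_elim (simp add: eq)
  have "(\<lambda>z. (1/2) * z^2 * \<phi> z) has_fps_expansion fps_const (1/2) * fps_X^2 * P"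
    by (intro fps_expansion_intros P)
  then have "(\<lambda>z. z * deriv f z - f z) has_fps_expansion fps_const (1/2) * fps_X^2 * P"
    using has_fps_expansion_cong[OF ev refl] by blast
  moreover have "(\<lambda>z. z * deriv f z - f z) has_fps_expansion fps_X * fps_deriv F - F"
    by (intro fps_expansion_intros F)
  ultimately have "fps_X * fps_deriv F - F = fps_const (1/2) * fps_X^2 * P"
    using fps_expansion_unique_complex by blast
  then have "(fps_X * fps_deriv F - F) $ k = (fps_const (1/2) * fps_X^2 * P) $ k"
    by simp
  then have "of_nat k * F $ k - F $ k = (1/2) * P $ (k - 2)"
    using k by (cases k) (simp_all add: fps_X_power_mult_nth mult.assoc)
  then show ?thesis
    by (simp add: F_def P_def taylor_coeff_eq_fps_expansion_nth algebra_simps)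
qed

lemma deriv_partial_sum:
  "deriv (partial_sum f n) z = 1 + (\<Sum>k=2..n. of_nat k * taylor_coeff f k * z^(k - 1))"
proof -
  have "(partial_sum f n has_field_derivative
          1 + (\<Sum>k=2..n. of_nat k * taylor_coeff f k * z^(k - 1))) (at z)"
    unfolding partial_sum_def[abs_def]
    by (auto intro!: derivative_eq_intros sum.cong simp: mult_ac)
  then show ?thesis by (rule DERIV_imp_deriv)
qed

lemma norm_taylor_coeff_le_euler_difference:
  fixes f \<phi> :: "complex \<Rightarrow> complex"
  assumes f_holo: "f holomorphic_on ball 0 1"
    and phi_holo: "\<phi> holomorphic_on ball 0 1"
    and phi_bound: "\<And>z. z \<in> ball 0 1 \<Longrightarrow> cmod (\<phi> z) \<le> 1"
    and eq: "\<And>z. z \<in> ball 0 1 \<Longrightarrow> z * deriv f z - f z = (1/2) * z^2 * \<phi> z"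
    and k: "k \<ge> 2"
  shows "cmod (taylor_coeff f k) \<le> 1 / (2 * (real k - 1))"
proof -
  have "(of_nat k - 1) * taylor_coeff f k = (1/2) * taylor_coeff \<phi> (k - 2)"
    using k by (intro taylor_coeff_euler_difference[OF _ _ f_holo phi_holo eq]) auto
  moreover have "of_nat k - 1 = (of_nat (k - 1) :: complex)"
    using k by (simp add: of_nat_diff)
  ultimately have "real (k - 1) * cmod (taylor_coeff f k) = (1/2) * cmod (taylor_coeff \<phi> (k - 2))"
    by (metis norm_mult norm_of_nat norm_divide norm_one norm_numeral times_divide_eq_left mult_1)
  then have "(real k - 1) * cmod (taylor_coeff f k) = (1/2) * cmod (taylor_coeff \<phi> (k - 2))"
    using k by (simp add: of_nat_diff)
  also have "\<dots> \<le> 1/2"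
    using norm_taylor_coeff_le[OF phi_holo phi_bound] by simp
  finally show ?thesis
    using k by (simp add: field_simps)
qed

lemma norm_deriv_partial_sum_sub_one_le:
  fixes f \<phi> :: "complex \<Rightarrow> complex"
  assumes f_holo: "f holomorphic_on ball 0 1"
    and phi_holo: "\<phi> holomorphic_on ball 0 1"
    and phi_bound: "\<And>z. z \<in> ball 0 1 \<Longrightarrow> cmod (\<phi> z) \<le> 1"
    and eq: "\<And>z. z \<in> ball 0 1 \<Longrightarrow> z * deriv f z - f z = (1/2) * z^2 * \<phi> z"
    and z: "cmod z \<le> r"
  shows "cmod (deriv (partial_sum f n) z - 1)
           \<le> (\<Sum>k=2..n. real k / (2 * (real k - 1)) * r^(k - 1))"
proof -
  have term_le: "cmod (of_nat k * taylor_coeff f k * z^(k - 1))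
                   \<le> real k / (2 * (real k - 1)) * r^(k - 1)"
    if k: "k \<in> {2..n}" for k
  proof -
    have "cmod (taylor_coeff f k) \<le> 1 / (2 * (real k - 1))"
      using k by (intro norm_taylor_coeff_le_euler_difference[OF f_holo phi_holo phi_bound eq]) auto
    moreover have "cmod z ^ (k - 1) \<le> r^(k - 1)"
      using z by (intro power_mono) auto
    ultimately have "real k * cmod (taylor_coeff f k) * cmod z ^ (k - 1)
                       \<le> real k * (1 / (2 * (real k - 1))) * r^(k - 1)"
      using k by (intro mult_mono mult_left_mono) auto
    then show ?thesis
      by (simp add: norm_mult norm_power)
  qed
  have "cmod (deriv (partial_sum f n) z - 1)
          = cmod (\<Sum>k=2..n. of_nat k * taylor_coeff f k * z^(k - 1))"
    by (simp add: deriv_partial_sum)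
  also have "\<dots> \<le> (\<Sum>k=2..n. cmod (of_nat k * taylor_coeff f k * z^(k - 1)))"
    by (rule norm_sum)
  also have "\<dots> \<le> (\<Sum>k=2..n. real k / (2 * (real k - 1)) * r^(k - 1))"
    by (rule sum_mono) (rule term_le)
  finally show ?thesis .
qed

(* For k > 10 the weight k / (2 (k - 1)) is at most 11/20, so the added term dominates the
   tail of the series by a geometric series; this makes the bound an induction invariant. *)
lemma weighted_sum_plus_tail_le:
  fixes N :: nat
  assumes "N \<ge> 10"
  shows "(\<Sum>k=2..N. real k / (2 * (real k - 1)) * 0.547^(k - 1))
          + 11 / (20 * (1 - 0.547)) * 0.547^N \<le> 0.9998"
  using assms
proof (induction N rule: dec_induct)
  case base
  have "{2..10::nat} = {2,3,4,5,6,7,8,9,10}" by auto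
  then show ?case by (simp add: power_divide)
next
  case (step N)
  define r :: real where "r = 0.547"
  have r: "0 < r" "r < 1" by (auto simp: r_def)
  have "(\<Sum>k=2..Suc N. real k / (2 * (real k - 1)) * r^(k - 1)) =
        (\<Sum>k=2..N. real k / (2 * (real k - 1)) * r^(k - 1)) + real (Suc N) / (2 * real N) * r^N"
    using step.hyps by (simp add: sum.cl_ivl_Suc)
  moreover have "real (Suc N) / (2 * real N) * r^N \<le> 11/20 * r^N"
    using step.hyps r by (intro mult_right_mono) (auto simp: field_simps)
  moreover have "11 / (20 * (1 - r)) * r^(Suc N) = 11 / (20 * (1 - r)) * r^N - 11/20 * r^N"
    using r by (simp add: field_simps)
  ultimately show ?case
    using step.IH unfolding r_def by linarith
qed

lemma weighted_sum_lt_one: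
  "(\<Sum>k=2..N. real k / (2 * (real k - 1)) * 0.547^(k - 1)) < (1::real)"
proof -
  let ?w = "\<lambda>k. real k / (2 * (real k - 1)) * 0.547^(k - 1)"
  have "(\<Sum>k=2..N. ?w k) \<le> (\<Sum>k=2..max N 10. ?w k)"
    by (intro sum_mono2) auto
  also have "\<dots> \<le> 0.9998"
  proof -
    have "0 \<le> 11 / (20 * (1 - 0.547)) * (0.547::real)^max N 10" by simp
    then show ?thesis using weighted_sum_plus_tail_le[of "max N 10"] by linarith
  qed
  finally show ?thesis by simp
qed

theorem theorem3p3:
  fixes f \<phi> :: "complex \<Rightarrow> complex"
  assumes f_holo: "f holomorphic_on ball 0 1"
    and f0: "f 0 = 0"
    and f'0: "deriv f 0 = 1"
    and phi_holo: "\<phi> holomorphic_on ball 0 1"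
    and phi_bound: "\<And>z. z \<in> ball 0 1 \<Longrightarrow> cmod (\<phi> z) \<le> 1"
    and eq: "\<And>z. z \<in> ball 0 1 \<Longrightarrow> z * deriv f z - f z = (1/2) * z^2 * \<phi> z"
  shows "\<forall>n\<ge>12. \<forall>z. cmod z \<le> 0.547 \<longrightarrow> Re (deriv (partial_sum f n) z) > 0"
proof (intro allI impI)
  fix n :: nat and z :: complex
  assume "cmod z \<le> 0.547"
  with f_holo phi_holo phi_bound eq
  have "cmod (deriv (partial_sum f n) z - 1)
          \<le> (\<Sum>k=2..n. real k / (2 * (real k - 1)) * 0.547^(k - 1))"
    by (rule norm_deriv_partial_sum_sub_one_le)
  also have "\<dots> < 1"
    by (rule weighted_sum_lt_one)
  finally have "cmod (deriv (partial_sum f n) z - 1) < 1" .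
  moreover have "1 - cmod (deriv (partial_sum f n) z - 1) \<le> Re (deriv (partial_sum f n) z)"
    using abs_Re_le_cmod[of "deriv (partial_sum f n) z - 1"] by simp
  ultimately show "Re (deriv (partial_sum f n) z) > 0"
    by linarith
qed

end
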